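(* There is an absolute constant $c_0 > 0$ such that the following holds. Let $\mathcal{U}$ be a finite set, $\mathbf{a} \in \mathbb{Z}_{\geq 0}^{\mathcal{U}}$ with $F_1 = \sum_{i \in \mathcal{U}} \mathbf{a}_i$, let $k > 0$, $\delta \in (0,1)$, and let $A \subseteq \mathcal{U}$ be such that $\mathbf{a}_i \leq F_1\delta/(2k^2)$ for all $i \in A$. Let $h \geq c_0 k$ be an integer and $f : \mathcal{U} \to [h]$ a pairwise-independent hash function. Then with probability at least $1-\delta$, \[ \forall j \in [h]:\quad \sum_{i \in A \cap f^{-1}(j)} \mathbf{a}_i \leq F_1/k . \]
   Context: $f$ is a pairwise-independent hash function if for each $i$, $f(i)$ is uniformly distributed on $[h] = \{1,\dots,h\}$ and for any distinct $i,i'$ the values $f(i), f(i')$ are independent. *)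

theory Defs
  imports "HOL-Probability.Probability"
begin

definition pairwise_indep_hash :: "('u \<Rightarrow> nat) pmf \<Rightarrow> 'u set \<Rightarrow> nat \<Rightarrow> bool" where
  "pairwise_indep_hash p U h \<longleftrightarrow>
     (\<forall>i\<in>U. map_pmf (\<lambda>f. f i) p = pmf_of_set {1..h}) \<and>
     (\<forall>i\<in>U. \<forall>i'\<in>U. i \<noteq> i' \<longrightarrow>
        map_pmf (\<lambda>f. (f i, f i')) p = pair_pmf (pmf_of_set {1..h}) (pmf_of_set {1..h}))"

end

theory Submission
  imports Defs
begin

text \<open>Write \<open>F = \<Sum>\<^sub>i a\<^sub>i\<close>. The load of bucket \<open>j\<close> is its expectation
  \<open>\<Sum>\<^sub>A a\<^sub>i / h \<le> F/(4k)\<close> plus the deviation \<open>Y\<^sub>j = \<Sum>\<^sub>A a\<^sub>i (1[f i = j] - 1/h)\<close>.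
  Pairwise independence kills the cross terms of \<open>E[Y\<^sub>j\<^sup>2]\<close>, so
  \<open>E[\<Sum>\<^sub>j Y\<^sub>j\<^sup>2] \<le> \<Sum>\<^sub>A a\<^sub>i\<^sup>2 \<le> max\<^sub>A a\<^sub>i \<cdot> F \<le> F\<^sup>2\<delta>/(2k\<^sup>2)\<close>. An overloaded bucket
  forces \<open>\<Sum>\<^sub>j Y\<^sub>j\<^sup>2 > (3F/(4k))\<^sup>2\<close>, which by Markov's inequality has probability
  at most \<open>8\<delta>/9\<close>.\<close>

definition centred_indicator :: "nat \<Rightarrow> nat \<Rightarrow> nat \<Rightarrow> real" where
  "centred_indicator h j x = (if x = j then 1 else 0) - 1 / real h"

definition load_deviation :: "nat \<Rightarrow> ('u \<Rightarrow> real) \<Rightarrow> 'u set \<Rightarrow> nat \<Rightarrow> ('u \<Rightarrow> nat) \<Rightarrow> real" where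
  "load_deviation h a A j f = (\<Sum>i\<in>A. a i * centred_indicator h j (f i))"

lemma sum_centred_indicator:
  assumes "j \<in> {1..h}"
  shows "(\<Sum>x\<in>{1..h}. centred_indicator h j x) = 0"
  using assms by (simp add: centred_indicator_def sum_subtractf)

lemma abs_centred_indicator_le_1: "\<bar>centred_indicator h j x\<bar> \<le> 1"
proof (cases "h = 0")
  case False
  then have "0 \<le> 1 / real h" "1 / real h \<le> 1" by auto
  then show ?thesis by (auto simp: centred_indicator_def)
qed (simp add: centred_indicator_def)

lemma expectation_pair_pmf_of_set_mult:
  fixes g g' :: "'a \<Rightarrow> real"
  assumes "finite S" "S \<noteq> {}" "finite T" "T \<noteq> {}"
  shows "measure_pmf.expectation (pair_pmf (pmf_of_set S) (pmf_of_set T)) (\<lambda>(x, y). g x * g' y) =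
    measure_pmf.expectation (pmf_of_set S) g * measure_pmf.expectation (pmf_of_set T) g'"
proof -
  have "measure_pmf.expectation (pair_pmf (pmf_of_set S) (pmf_of_set T)) (\<lambda>(x, y). g x * g' y) =
      (\<Sum>z\<in>S \<times> T. (case z of (x, y) \<Rightarrow> g x * g' y) * pmf (pair_pmf (pmf_of_set S) (pmf_of_set T)) z)"
    using assms by (intro integral_measure_pmf_real) (auto simp: set_pmf_of_set)
  also have "\<dots> = (\<Sum>x\<in>S. \<Sum>y\<in>T. g x * g' y / (real (card S) * real (card T)))"
    unfolding sum.cartesian_product by (intro sum.cong refl) (auto simp: pmf_pair assms)
  also have "\<dots> = sum g S / card S * (sum g' T / card T)"
    by (simp add: sum_product sum_divide_distrib)
  finally show ?thesis
    using assms by (simp add: integral_pmf_of_set)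
qed

lemma expectation_centred_indicator_cross:
  assumes "pairwise_indep_hash p U h" "i \<in> U" "i' \<in> U" "i \<noteq> i'" "j \<in> {1..h}"
  shows "measure_pmf.expectation p
    (\<lambda>f. centred_indicator h j (f i) * centred_indicator h j (f i')) = 0"
proof -
  have "measure_pmf.expectation p (\<lambda>f. centred_indicator h j (f i) * centred_indicator h j (f i')) =
      measure_pmf.expectation (map_pmf (\<lambda>f. (f i, f i')) p)
        (\<lambda>(x, y). centred_indicator h j x * centred_indicator h j y)"
    by simp
  also have "map_pmf (\<lambda>f. (f i, f i')) p = pair_pmf (pmf_of_set {1..h}) (pmf_of_set {1..h})"
    using assms unfolding pairwise_indep_hash_def by auto
  also have "measure_pmf.expectation (pair_pmf (pmf_of_set {1..h}) (pmf_of_set {1..h}))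
      (\<lambda>(x, y). centred_indicator h j x * centred_indicator h j y) = 0"
    using assms(5) sum_centred_indicator[OF assms(5)]
    by (subst expectation_pair_pmf_of_set_mult) (auto simp: integral_pmf_of_set)
  finally show ?thesis .
qed

lemma expectation_centred_indicator_sq_le:
  assumes "pairwise_indep_hash p U h" "i \<in> U" "j \<in> {1..h}"
  shows "measure_pmf.expectation p (\<lambda>f. (centred_indicator h j (f i))\<^sup>2) \<le> 1 / real h"
proof -
  let ?\<phi> = "centred_indicator h j"
  have "measure_pmf.expectation p (\<lambda>f. (?\<phi> (f i))\<^sup>2) =
      measure_pmf.expectation (map_pmf (\<lambda>f. f i) p) (\<lambda>x. (?\<phi> x)\<^sup>2)"
    by simp
  also have "map_pmf (\<lambda>f. f i) p = pmf_of_set {1..h}"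
    using assms unfolding pairwise_indep_hash_def by auto
  also have "measure_pmf.expectation (pmf_of_set {1..h}) (\<lambda>x. (?\<phi> x)\<^sup>2) =
      (\<Sum>x\<in>{1..h}. (?\<phi> x)\<^sup>2) / real h"
    using assms(3) by (subst integral_pmf_of_set) auto
  also have "(\<Sum>x\<in>{1..h}. (?\<phi> x)\<^sup>2) =
      (\<Sum>x\<in>{1..h}. if x = j then ?\<phi> j else 0) - 1 / real h * (\<Sum>x\<in>{1..h}. ?\<phi> x)"
  proof -
    have "(?\<phi> x)\<^sup>2 = (if x = j then ?\<phi> j else 0) - 1 / real h * ?\<phi> x" for x
      by (simp add: centred_indicator_def power2_eq_square algebra_simps)
    then show ?thesis
      by (simp add: sum_subtractf sum_distrib_left)
  qed
  also have "\<dots> = ?\<phi> j"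
    using assms(3) sum_centred_indicator[OF assms(3)] by simp
  also have "?\<phi> j \<le> 1"
    by (simp add: centred_indicator_def)
  finally show ?thesis
    by (simp add: divide_right_mono)
qed

lemma expectation_load_deviation_sq_le:
  assumes hash: "pairwise_indep_hash p U h" and "A \<subseteq> U" "finite A" and j: "j \<in> {1..h}"
  shows "measure_pmf.expectation p (\<lambda>f. (load_deviation h a A j f)\<^sup>2) \<le> (\<Sum>i\<in>A. (a i)\<^sup>2) / real h"
proof -
  let ?\<phi> = "centred_indicator h j"
  let ?E = "\<lambda>i i'. measure_pmf.expectation p (\<lambda>f. ?\<phi> (f i) * ?\<phi> (f i'))"
  have integrable: "integrable (measure_pmf p) (\<lambda>f. a i * a i' * (?\<phi> (f i) * ?\<phi> (f i')))" for i i'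
  proof (rule measure_pmf.integrable_const_bound[where B = "\<bar>a i * a i'\<bar>"])
    have "\<bar>?\<phi> x * ?\<phi> y\<bar> \<le> 1" for x y
      using mult_mono[OF abs_centred_indicator_le_1 abs_centred_indicator_le_1]
      by (simp add: abs_mult)
    then show "AE f in measure_pmf p. norm (a i * a i' * (?\<phi> (f i) * ?\<phi> (f i'))) \<le> \<bar>a i * a i'\<bar>"
      by (intro AE_I2) (simp add: abs_mult mult_left_le)
  qed simp
  have "(\<lambda>f. (load_deviation h a A j f)\<^sup>2) =
      (\<lambda>f. \<Sum>i\<in>A. \<Sum>i'\<in>A. a i * a i' * (?\<phi> (f i) * ?\<phi> (f i')))"
    by (auto simp: load_deviation_def power2_eq_square sum_product intro!: sum.cong)
  then have "measure_pmf.expectation p (\<lambda>f. (load_deviation h a A j f)\<^sup>2) =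
      (\<Sum>i\<in>A. \<Sum>i'\<in>A. a i * a i' * ?E i i')"
    using integrable by (simp add: Bochner_Integration.integral_sum integrable_sum)
  also have "\<dots> = (\<Sum>i\<in>A. \<Sum>i'\<in>A. if i' = i then (a i)\<^sup>2 * ?E i i else 0)"
    using expectation_centred_indicator_cross[OF hash _ _ _ j] assms(2)
    by (intro sum.cong refl) (auto simp: power2_eq_square)
  also have "\<dots> = (\<Sum>i\<in>A. (a i)\<^sup>2 * measure_pmf.expectation p (\<lambda>f. (?\<phi> (f i))\<^sup>2))"
    using assms(3) by (simp add: power2_eq_square)
  also have "\<dots> \<le> (\<Sum>i\<in>A. (a i)\<^sup>2 * (1 / real h))"
    using expectation_centred_indicator_sq_le[OF hash _ j] assms(2)
    by (intro sum_mono mult_left_mono) auto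
  finally show ?thesis
    by (simp add: sum_divide_distrib)
qed

lemma integrable_load_deviation_sq:
  "integrable (measure_pmf p) (\<lambda>f. (load_deviation h a A j f)\<^sup>2)"
proof (rule measure_pmf.integrable_const_bound[where B = "(\<Sum>i\<in>A. \<bar>a i\<bar>)\<^sup>2"])
  have bound: "\<bar>load_deviation h a A j f\<bar> \<le> (\<Sum>i\<in>A. \<bar>a i\<bar>)" for f
    unfolding load_deviation_def
    by (rule order_trans[OF sum_abs sum_mono])
       (auto simp: abs_mult intro: mult_left_le abs_centred_indicator_le_1)
  have "(load_deviation h a A j f)\<^sup>2 \<le> (\<Sum>i\<in>A. \<bar>a i\<bar>)\<^sup>2" for f
    using power_mono[OF bound[of f] abs_ge_zero, of 2] by simp
  then show "AE f in measure_pmf p. norm ((load_deviation h a A j f)\<^sup>2) \<le> (\<Sum>i\<in>A. \<bar>a i\<bar>)\<^sup>2"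
    by (intro AE_I2) simp
qed simp

lemma expectation_sum_load_deviation_sq_le:
  assumes "pairwise_indep_hash p U h" "A \<subseteq> U" "finite A"
  shows "measure_pmf.expectation p (\<lambda>f. \<Sum>j\<in>{1..h}. (load_deviation h a A j f)\<^sup>2) \<le> (\<Sum>i\<in>A. (a i)\<^sup>2)"
proof -
  have "measure_pmf.expectation p (\<lambda>f. \<Sum>j\<in>{1..h}. (load_deviation h a A j f)\<^sup>2) =
      (\<Sum>j\<in>{1..h}. measure_pmf.expectation p (\<lambda>f. (load_deviation h a A j f)\<^sup>2))"
    by (rule Bochner_Integration.integral_sum) (rule integrable_load_deviation_sq)
  also have "\<dots> \<le> (\<Sum>j\<in>{1..h}. (\<Sum>i\<in>A. (a i)\<^sup>2) / real h)"
    using expectation_load_deviation_sq_le[OF assms] by (intro sum_mono) auto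
  also have "\<dots> \<le> (\<Sum>i\<in>A. (a i)\<^sup>2)"
    by (simp add: sum_nonneg)
  finally show ?thesis .
qed

lemma bucket_load_eq:
  assumes "finite A"
  shows "(\<Sum>i\<in>{i\<in>A. f i = j}. a i) = load_deviation h a A j f + (\<Sum>i\<in>A. a i) / real h"
proof -
  have "(\<Sum>i\<in>{i\<in>A. f i = j}. a i) = (\<Sum>i\<in>A. a i * (if f i = j then 1 else 0))"
    using assms by (simp add: sum.inter_filter[symmetric] if_distrib cong: if_cong)
  then show ?thesis
    by (simp add: load_deviation_def centred_indicator_def algebra_simps sum_subtractf
        sum_distrib_left sum_divide_distrib)
qed

lemma sum_sq_le_max_times_sum:
  fixes a :: "'a \<Rightarrow> real"
  assumes "\<And>i. i \<in> A \<Longrightarrow> 0 \<le> a i \<and> a i \<le> M"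
  shows "(\<Sum>i\<in>A. (a i)\<^sup>2) \<le> M * (\<Sum>i\<in>A. a i)"
  unfolding sum_distrib_left power2_eq_square
  using assms by (intro sum_mono) (simp add: mult_right_mono)

theorem prob_all_buckets_light:
  fixes a :: "'u \<Rightarrow> real"
  assumes "finite U" "A \<subseteq> U" and nonneg: "\<And>i. i \<in> U \<Longrightarrow> 0 \<le> a i"
    and "k > 0" "\<delta> > 0"
    and small: "\<And>i. i \<in> A \<Longrightarrow> a i \<le> (\<Sum>i'\<in>U. a i') * \<delta> / (2 * k\<^sup>2)"
    and "4 * k \<le> real h" and hash: "pairwise_indep_hash p U h"
  shows "measure_pmf.prob p
    {f. \<forall>j\<in>{1..h}. (\<Sum>i\<in>{i\<in>A. f i = j}. a i) \<le> (\<Sum>i'\<in>U. a i') / k} \<ge> 1 - \<delta>"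
proof -
  define F where "F = (\<Sum>i'\<in>U. a i')"
  define light where "light = {f. \<forall>j\<in>{1..h}. (\<Sum>i\<in>{i\<in>A. f i = j}. a i) \<le> F / k}"
  define Z where "Z f = (\<Sum>j\<in>{1..h}. (load_deviation h a A j f)\<^sup>2)" for f
  define T where "T = (3 * F / (4 * k))\<^sup>2"
  have "finite A"
    using assms(1,2) finite_subset by blast
  have sum_A_le: "(\<Sum>i\<in>A. a i) \<le> F"
    unfolding F_def using assms(1,2) nonneg by (intro sum_mono2) auto
  have "F \<ge> 0"
    unfolding F_def using nonneg by (simp add: sum_nonneg)
  show ?thesis
  proof (cases "F = 0")
    case True
    then have "a i = 0" if "i \<in> A" for i
      using small[OF that] nonneg assms(2) that by (force simp: F_def)
    then have "light = UNIV"
      using True by (simp add: light_def)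
    then show ?thesis
      using \<open>\<delta> > 0\<close> by (simp add: light_def F_def)
  next
    case False
    then have "F > 0" "T > 0"
      using \<open>F \<ge> 0\<close> \<open>k > 0\<close> by (auto simp: T_def)
    have "h > 0"
      using assms(4,7) by (cases h) auto
    have Z_ge_T: "f \<notin> light \<Longrightarrow> T \<le> Z f" for f
    proof -
      assume "f \<notin> light"
      then obtain j where j: "j \<in> {1..h}" and heavy: "(\<Sum>i\<in>{i\<in>A. f i = j}. a i) > F / k"
        by (auto simp: light_def not_le)
      have "(\<Sum>i\<in>A. a i) / real h \<le> F / (4 * k)"
        using sum_A_le \<open>F > 0\<close> \<open>h > 0\<close> assms(4,7) by (intro frac_le) auto
      with heavy have "F / k - F / (4 * k) < load_deviation h a A j f"
        using bucket_load_eq[OF \<open>finite A\<close>, where f = f and j = j and a = a and h = h] by linarith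
      moreover have "F / k - F / (4 * k) = 3 * F / (4 * k)"
        using assms(4) by (simp add: field_simps)
      ultimately have "3 * F / (4 * k) < load_deviation h a A j f"
        by simp
      then have "T \<le> (load_deviation h a A j f)\<^sup>2"
        using \<open>F > 0\<close> assms(4) unfolding T_def by (intro power_mono) auto
      also have "\<dots> \<le> Z f"
        unfolding Z_def using j by (intro member_le_sum) auto
      finally show ?thesis .
    qed
    have expectation_Z: "measure_pmf.expectation p Z \<le> F * \<delta> / (2 * k\<^sup>2) * F"
    proof -
      have "measure_pmf.expectation p Z \<le> (\<Sum>i\<in>A. (a i)\<^sup>2)"
        unfolding Z_def using hash assms(2) \<open>finite A\<close> by (rule expectation_sum_load_deviation_sq_le)
      also have "\<dots> \<le> F * \<delta> / (2 * k\<^sup>2) * (\<Sum>i\<in>A. a i)"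
        using nonneg small assms(2) by (intro sum_sq_le_max_times_sum) (auto simp: F_def)
      also have "\<dots> \<le> F * \<delta> / (2 * k\<^sup>2) * F"
        using sum_A_le \<open>F \<ge> 0\<close> \<open>\<delta> > 0\<close> by (intro mult_left_mono) auto
      finally show ?thesis .
    qed
    have "measure_pmf.prob p (UNIV - light) \<le> measure_pmf.prob p {f \<in> space (measure_pmf p). T \<le> Z f}"
      using Z_ge_T by (intro measure_pmf.finite_measure_mono) auto
    also have "\<dots> \<le> measure_pmf.expectation p Z / T"
      by (rule integral_Markov_inequality_measure[where A = UNIV])
         (auto simp: Z_def \<open>T > 0\<close> integrable_load_deviation_sq intro!: AE_I2 sum_nonneg)
    also have "\<dots> \<le> F * \<delta> / (2 * k\<^sup>2) * F / T"
      using expectation_Z \<open>T > 0\<close> by (intro divide_right_mono) auto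
    also have "\<dots> = 8 * \<delta> / 9"
      using \<open>F > 0\<close> \<open>k > 0\<close> by (simp add: T_def field_simps power2_eq_square)
    finally have "measure_pmf.prob p (UNIV - light) \<le> \<delta>"
      using \<open>\<delta> > 0\<close> by simp
    then show ?thesis
      using measure_pmf.prob_compl[of light p] by (simp add: light_def F_def)
  qed
qed

theorem lemma7:
  shows "\<exists>c0::real. c0 > 0 \<and>
    (\<forall>(U::nat set) (a::nat \<Rightarrow> nat) (k::real) (\<delta>::real) (A::nat set) (h::nat)
        (p::(nat \<Rightarrow> nat) pmf).
      finite U \<longrightarrow> k > 0 \<longrightarrow> 0 < \<delta> \<longrightarrow> \<delta> < 1 \<longrightarrow> A \<subseteq> U \<longrightarrow>
      (\<forall>i\<in>A. real (a i) \<le> real (\<Sum>i'\<in>U. a i') * \<delta> / (2 * k\<^sup>2)) \<longrightarrow>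
      real h \<ge> c0 * k \<longrightarrow>
      pairwise_indep_hash p U h \<longrightarrow>
      measure_pmf.prob p
        {f. \<forall>j\<in>{1..h}. real (\<Sum>i\<in>{i\<in>A. f i = j}. a i) \<le> real (\<Sum>i'\<in>U. a i') / k}
        \<ge> 1 - \<delta>)"
proof (intro exI[of _ 4] conjI allI impI)
  fix U A :: "nat set" and a :: "nat \<Rightarrow> nat" and k \<delta> :: real and h :: nat
    and p :: "(nat \<Rightarrow> nat) pmf"
  assume "finite U" "k > 0" "0 < \<delta>" "\<delta> < 1" "A \<subseteq> U"
    and "\<forall>i\<in>A. real (a i) \<le> real (\<Sum>i'\<in>U. a i') * \<delta> / (2 * k\<^sup>2)"
    and "real h \<ge> 4 * k" "pairwise_indep_hash p U h"
  then show "measure_pmf.prob p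
      {f. \<forall>j\<in>{1..h}. real (\<Sum>i\<in>{i\<in>A. f i = j}. a i) \<le> real (\<Sum>i'\<in>U. a i') / k}
      \<ge> 1 - \<delta>"
    using prob_all_buckets_light[of U A "\<lambda>i. real (a i)" k \<delta> h p] by simp
qed simp

end
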